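(* Let $H\in(0,1)$, $T=1$, $\mathbb{T}=[0,1]$, $N=2^{n_0}$ with $n_0\in\mathbb{N}$, and $\mathbb{T}_N=\{jN^{-1}: j=0,\dots,N\}$. Let $(A_\ell,\ell\in\mathbb{N}_0)$, $A_\ell\ge0$, satisfy $A_\ell\le C\ell^{-\alpha}$ for all $\ell>\ell_0$, for some $C>0$, $\ell_0\in\mathbb{N}$, $\alpha>2$. Let $(\beta^H_{\ell,m})$ be independent real-valued fractional Brownian motions with Hurst parameter $H$ and, for $\mu\in\mathbb{N}$, let $\beta^{H,\mu}_{\ell,m}$ be processes on $\mathbb{T}_N$ (the conditionalized random midpoint displacement approximations of $\beta^H_{\ell,m}$) satisfying, for some constants $C'>0$ and $r_H>0$ independent of $\ell,m,\mu$, $$\sup_{t\in\mathbb{T}_N}\|\beta^{H,\mu}_{\ell,m}(t)-\beta^H_{\ell,m}(t)\|_{L^2(\Omega)}\le C'\mu^{-r_H}.$$ Define, for $\kappa\in\mathbb{N}$, $$B_Q^H(t)=\sum_{\ell=0}^\infty\sum_{m=-\ell}^{\ell}\sqrt{A_\ell}\,\beta^H_{\ell,m}(t)Y_{\ell,m},\qquad B_Q^{H,\kappa,\mu}(t)=\sum_{\ell=0}^\kappa\sum_{m=-\ell}^{\ell}\sqrt{A_\ell}\,\beta^{H,\mu}_{\ell,m}(t)Y_{\ell,m}.$$ Then there is a constant $\tilde C$ such that for all $\kappa\ge\ell_0$, $$\sup_{t\in\mathbb{T}_N}\|B_Q^H(t)-B_Q^{H,\kappa,\mu}(t)\|_{L^2(\Omega;L^2(\mathbb{S}^2))}\le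 \tilde C\big(\kappa^{-(\alpha-2)/2}+\sqrt{\operatorname{tr}Q}\,\mu^{-r_H}\big).$$
   Context: $\mathbb{S}^2$ is the unit sphere in $\mathbb{R}^3$; $(Y_{\ell,m})$ are the real-valued spherical harmonics (orthonormal basis of $L^2(\mathbb{S}^2)$); a real-valued fractional Brownian motion with Hurst parameter $H$ is a continuous centered Gaussian process with covariance $\frac12(t^{2H}+s^{2H}-|t-s|^{2H})$. $Q$ is the covariance operator $QY_{\ell,m}=A_\ell Y_{\ell,m}$ with trace $\operatorname{tr}Q=\sum_{\ell\ge0}(2\ell+1)A_\ell$. *)

theory Defs
  imports "HOL-Probability.Probability"
begin

definition sph :: "real \<times> real \<Rightarrow> real \<times> real \<times> real" where
  "sph = (\<lambda>(\<theta>, \<phi>). (sin \<theta> * cos \<phi>, sin \<theta> * sin \<phi>, cos \<theta>))"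

definition sphere_measure :: "(real \<times> real \<times> real) measure" where
  "sphere_measure =
     distr (density (lborel \<Otimes>\<^sub>M lborel)
              (\<lambda>(\<theta>, \<phi>). ennreal (indicator ({0..pi} \<times> {0..<2*pi}) (\<theta>, \<phi>) * sin \<theta>)))
           borel sph"

definition sph_ONB :: "(nat \<Rightarrow> int \<Rightarrow> real \<times> real \<times> real \<Rightarrow> real) \<Rightarrow> bool" where
  "sph_ONB Y \<longleftrightarrow>
     (\<forall>l m. Y l m \<in> borel_measurable sphere_measure) \<and>
     (\<forall>l m l' m'. \<bar>m\<bar> \<le> int l \<longrightarrow> \<bar>m'\<bar> \<le> int l' \<longrightarrow>
         integrable sphere_measure (\<lambda>x. Y l m x * Y l' m' x) \<and>
         (\<integral>x. Y l m x * Y l' m' x \<partial>sphere_measure) = (if l = l' \<and> m = m' then 1 else 0)) \<and>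
     (\<forall>f. f \<in> borel_measurable sphere_measure \<longrightarrow> integrable sphere_measure (\<lambda>x. (f x)\<^sup>2) \<longrightarrow>
         (\<forall>l m. \<bar>m\<bar> \<le> int l \<longrightarrow> (\<integral>x. f x * Y l m x \<partial>sphere_measure) = 0) \<longrightarrow>
         (AE x in sphere_measure. f x = 0))"

definition centered_gaussian_rv :: "'a measure \<Rightarrow> ('a \<Rightarrow> real) \<Rightarrow> bool" where
  "centered_gaussian_rv M X \<longleftrightarrow> X \<in> borel_measurable M \<and>
     ((AE \<omega> in M. X \<omega> = 0) \<or> (\<exists>s>0. distributed M lborel X (normal_density 0 s)))"

definition fBm :: "'a measure \<Rightarrow> real \<Rightarrow> (real \<Rightarrow> 'a \<Rightarrow> real) \<Rightarrow> bool" where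
  "fBm M H X \<longleftrightarrow>
     (\<forall>t\<in>{0..1}. X t \<in> borel_measurable M) \<and>
     (\<forall>\<omega>\<in>space M. continuous_on {0..1} (\<lambda>t. X t \<omega>)) \<and>
     (\<forall>(n::nat) (c::nat \<Rightarrow> real) (ts::nat \<Rightarrow> real). (\<forall>i<n. ts i \<in> {0..1}) \<longrightarrow>
         centered_gaussian_rv M (\<lambda>\<omega>. \<Sum>i<n. c i * X (ts i) \<omega>)) \<and>
     (\<forall>s\<in>{0..1}. \<forall>t\<in>{0..1}. integrable M (\<lambda>\<omega>. X s \<omega> * X t \<omega>) \<and>
         (\<integral>\<omega>. X s \<omega> * X t \<omega> \<partial>M) = (t powr (2*H) + s powr (2*H) - \<bar>t - s\<bar> powr (2*H)) / 2)"

definition L2_sq :: "'a measure \<Rightarrow> ('a \<Rightarrow> real \<times> real \<times> real \<Rightarrow> real) \<Rightarrow> ennreal" where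
  "L2_sq M F = (\<integral>\<^sup>+\<omega>. (\<integral>\<^sup>+x. ennreal ((F \<omega> x)\<^sup>2) \<partial>sphere_measure) \<partial>M)"

definition trunc_field ::
  "(nat \<Rightarrow> real) \<Rightarrow> (nat \<Rightarrow> int \<Rightarrow> real \<Rightarrow> 'a \<Rightarrow> real) \<Rightarrow> (nat \<Rightarrow> int \<Rightarrow> real \<times> real \<times> real \<Rightarrow> real)
    \<Rightarrow> nat \<Rightarrow> real \<Rightarrow> 'a \<Rightarrow> real \<times> real \<times> real \<Rightarrow> real" where
  "trunc_field A b Y L t \<omega> x =
     (\<Sum>l\<le>L. \<Sum>m\<in>{-int l..int l}. sqrt (A l) * b l m t \<omega> * Y l m x)"

definition trQ :: "(nat \<Rightarrow> real) \<Rightarrow> real" where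
  "trQ A = (\<Sum>l. (2 * real l + 1) * A l)"

end

(*
  For L \<ge> \<kappa> the error B_L(t) - B^(\<kappa>,\<mu>)(t) is a finite expansion in the orthonormal
  system Y, so by Parseval its squared L2(\<Omega>; L2(S2)) norm is the sum of the second moments
  of its coefficients: A_l E (\<beta>^\<mu> - \<beta>)^2 \<le> A_l C'^2 \<mu>^(-2r) for l \<le> \<kappa>, and
  A_l E \<beta>(t)^2 = A_l t^(2H) \<le> A_l for l > \<kappa>. The first group sums to at most
  tr Q C'^2 \<mu>^(-2r); the second is a tail of \<Sum> (2l+1) A_l, whose terms are O(l^(1-\<alpha>)),
  and a telescoping mean-value estimate bounds it by O(\<kappa>^(2-\<alpha>)). The errors increase
  with L, hence converge to their supremum, and the bound passes to the limit.
*)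

theory Submission
  imports Defs
begin

lemma powr_neg_diff_succ_ge:
  fixes s x :: real
  assumes "s > 0" "x > 0"
  shows "s * (x + 1) powr (-s - 1) \<le> x powr (-s) - (x + 1) powr (-s)"
proof -
  have "\<exists>z. x < z \<and> z < x + 1 \<and> (x + 1) powr (-s) - x powr (-s) = (x + 1 - x) * (-s * z powr (-s - 1))"
  proof (rule MVT2)
    fix y assume "x \<le> y"
    then show "((\<lambda>z. z powr (-s)) has_real_derivative -s * y powr (-s - 1)) (at y)"
      using assms by (intro has_real_derivative_powr) auto
  qed simp
  then obtain z where z: "x < z" "z < x + 1" "(x + 1) powr (-s) - x powr (-s) = -s * z powr (-s - 1)"
    by auto
  have "(x + 1) powr (-s - 1) \<le> z powr (-s - 1)"
    using assms z by (intro powr_mono2') auto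
  then have "s * (x + 1) powr (-s - 1) \<le> s * z powr (-s - 1)"
    using assms by (intro mult_left_mono) auto
  then show ?thesis
    using z(3) by linarith
qed

lemma sum_powr_tail_le:
  fixes a :: real and k L :: nat
  assumes "a > 1" "k > 0"
  shows "(\<Sum>l\<in>{k<..L}. real l powr (-a)) \<le> real k powr (1 - a) / (a - 1)"
proof (cases "k \<le> L")
  case True
  then have "(\<Sum>l\<in>{k<..L}. real l powr (-a)) \<le> (real k powr (1 - a) - real L powr (1 - a)) / (a - 1)"
  proof (induction L rule: dec_induct)
    case (step L)
    have "(a - 1) * (real L + 1) powr (-(a - 1) - 1) \<le> real L powr (-(a - 1)) - (real L + 1) powr (-(a - 1))"
      using assms step by (intro powr_neg_diff_succ_ge) auto
    then have "real (Suc L) powr (-a) \<le> (real L powr (1 - a) - real (Suc L) powr (1 - a)) / (a - 1)"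
      using assms by (simp add: field_simps add.commute)
    moreover have "{k<..Suc L} = insert (Suc L) {k<..L}"
      using step by auto
    ultimately show ?case
      using step by (simp add: diff_divide_distrib)
  qed simp
  also have "\<dots> \<le> real k powr (1 - a) / (a - 1)"
    using assms by (intro divide_right_mono) auto
  finally show ?thesis .
qed (use assms in simp)

lemma ex_LIMSEQ_le_if_mono_bounded_from:
  fixes F :: "nat \<Rightarrow> 'a::{complete_linorder, linorder_topology}"
  assumes "\<And>L L'. k \<le> L \<Longrightarrow> L \<le> L' \<Longrightarrow> F L \<le> F L'" "\<And>L. k \<le> L \<Longrightarrow> F L \<le> B"
  shows "\<exists>E. F \<longlonglongrightarrow> E \<and> E \<le> B"
proof (intro exI conjI)
  have "incseq (\<lambda>L. F (L + k))"
    using assms(1) by (auto simp: incseq_def)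
  then show "F \<longlonglongrightarrow> (SUP L. F (L + k))"
    by (rule LIMSEQ_offset[OF LIMSEQ_SUP])
  show "(SUP L. F (L + k)) \<le> B"
    using assms(2) by (intro SUP_least) auto
qed

lemma sq_rate_combination_le:
  fixes x a u c K T :: real
  assumes "0 \<le> K" "0 \<le> T" "0 \<le> u" "0 \<le> c"
  shows "K * x powr a + T * (c * u)\<^sup>2 \<le> (max c (sqrt K) * (x powr (a / 2) + sqrt T * u))\<^sup>2"
proof -
  define Ct where "Ct = max c (sqrt K)"
  have "K = (sqrt K)\<^sup>2"
    using assms by simp
  also have "\<dots> \<le> Ct\<^sup>2"
    unfolding Ct_def using assms by (intro power_mono) auto
  finally have K: "K \<le> Ct\<^sup>2" .
  have c: "c\<^sup>2 \<le> Ct\<^sup>2"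
    unfolding Ct_def using assms by (intro power_mono) auto
  have "K * x powr a + T * (c * u)\<^sup>2 = K * (x powr (a / 2))\<^sup>2 + c\<^sup>2 * (sqrt T * u)\<^sup>2"
    using assms by (simp add: power2_eq_square powr_add [symmetric] algebra_simps)
  also have "\<dots> \<le> Ct\<^sup>2 * (x powr (a / 2))\<^sup>2 + Ct\<^sup>2 * (sqrt T * u)\<^sup>2"
    using K c by (intro add_mono mult_right_mono) auto
  also have "\<dots> \<le> Ct\<^sup>2 * (x powr (a / 2))\<^sup>2 + Ct\<^sup>2 * (sqrt T * u)\<^sup>2 + 2 * Ct\<^sup>2 * (x powr (a / 2) * (sqrt T * u))"
    using assms by simp
  also have "\<dots> = (Ct * (x powr (a / 2) + sqrt T * u))\<^sup>2"
    by (simp add: power2_eq_square algebra_simps)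
  finally show ?thesis
    unfolding Ct_def .
qed

lemma trQ_term_le_powr:
  fixes A :: "nat \<Rightarrow> real"
  assumes "0 \<le> A l" "A l \<le> C * real l powr (-\<alpha>)" "0 < l"
  shows "(2 * real l + 1) * A l \<le> 3 * C * real l powr (1 - \<alpha>)"
proof -
  have "(2 * real l + 1) * A l \<le> (3 * real l) * A l"
    using assms by (intro mult_right_mono) auto
  also have "\<dots> \<le> (3 * real l) * (C * real l powr (-\<alpha>))"
    using assms by (intro mult_left_mono) auto
  also have "\<dots> = 3 * C * real l powr (1 - \<alpha>)"
    using assms powr_add[of "real l" 1 "-\<alpha>"] by simp
  finally show ?thesis .
qed

lemma summable_trQ_terms:
  fixes A :: "nat \<Rightarrow> real"
  assumes "\<And>l. 0 \<le> A l" "\<And>l. l > l0 \<Longrightarrow> A l \<le> C * real l powr (-\<alpha>)" "\<alpha> > 2"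
  shows "summable (\<lambda>l. (2 * real l + 1) * A l)"
proof (rule summable_comparison_test')
  show "summable (\<lambda>l. 3 * C * real l powr (1 - \<alpha>))"
    using assms by (intro summable_mult) (simp add: summable_real_powr_iff)
  show "norm ((2 * real l + 1) * A l) \<le> 3 * C * real l powr (1 - \<alpha>)" if "l \<ge> Suc l0" for l
    using trQ_term_le_powr[of A l] assms that by simp
qed

lemma trQ_partial_tail_le:
  fixes A :: "nat \<Rightarrow> real"
  assumes "\<And>l. 0 \<le> A l" "\<And>l. l > l0 \<Longrightarrow> A l \<le> C * real l powr (-\<alpha>)" "\<alpha> > 2" "0 \<le> C"
    and "l0 \<le> k" "0 < k"
  shows "(\<Sum>l\<in>{k<..L}. (2 * real l + 1) * A l) \<le> 3 * C / (\<alpha> - 2) * real k powr (2 - \<alpha>)"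
proof -
  have "(\<Sum>l\<in>{k<..L}. (2 * real l + 1) * A l) \<le> (\<Sum>l\<in>{k<..L}. 3 * C * real l powr (1 - \<alpha>))"
    using assms by (intro sum_mono trQ_term_le_powr) auto
  also have "\<dots> = 3 * C * (\<Sum>l\<in>{k<..L}. real l powr (-(\<alpha> - 1)))"
    by (simp add: sum_distrib_left)
  also have "\<dots> \<le> 3 * C * (real k powr (1 - (\<alpha> - 1)) / (\<alpha> - 1 - 1))"
    using assms by (intro mult_left_mono sum_powr_tail_le) auto
  finally show ?thesis
    by simp
qed

lemma trQ_partial_le:
  fixes A :: "nat \<Rightarrow> real"
  assumes "\<And>l. 0 \<le> A l" "summable (\<lambda>l. (2 * real l + 1) * A l)"
  shows "(\<Sum>l\<le>k. (2 * real l + 1) * A l) \<le> trQ A"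
  unfolding trQ_def using assms by (intro sum_le_suminf) auto

lemma fBm_nn_integral_sq_le_1:
  assumes "fBm M H X" "0 \<le> H" "t \<in> {0..1}"
  shows "(\<integral>\<^sup>+\<omega>. ennreal ((X t \<omega>)\<^sup>2) \<partial>M) \<le> 1"
proof -
  have "integrable M (\<lambda>\<omega>. X t \<omega> * X t \<omega>)
      \<and> (\<integral>\<omega>. X t \<omega> * X t \<omega> \<partial>M) = (t powr (2 * H) + t powr (2 * H) - \<bar>t - t\<bar> powr (2 * H)) / 2"
    using assms unfolding fBm_def by blast
  then have "integrable M (\<lambda>\<omega>. (X t \<omega>)\<^sup>2)" "(\<integral>\<omega>. (X t \<omega>)\<^sup>2 \<partial>M) = t powr (2 * H)"
    by (simp_all add: power2_eq_square)
  moreover have "t powr (2 * H) \<le> 1"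
    using assms by (intro powr_le1) auto
  ultimately show ?thesis
    by (simp add: nn_integral_eq_integral)
qed

lemma sph_ONB_nn_integral_sum_sq:
  assumes Y: "sph_ONB Y" and S: "finite S" "S \<subseteq> {(l, m). \<bar>m\<bar> \<le> int l}"
  shows "(\<integral>\<^sup>+x. ennreal ((\<Sum>(l, m)\<in>S. c l m * Y l m x)\<^sup>2) \<partial>sphere_measure)
    = ennreal (\<Sum>(l, m)\<in>S. (c l m)\<^sup>2)"
proof -
  define y where "y p = Y (fst p) (snd p)" for p
  have orth: "integrable sphere_measure (\<lambda>x. y p x * y q x)
      \<and> (\<integral>x. y p x * y q x \<partial>sphere_measure) = (if p = q then 1 else 0)"
    if pq: "p \<in> S" "q \<in> S" for p q
  proof -
    obtain l m l' m' where "p = (l, m)" "q = (l', m')" "\<bar>m\<bar> \<le> int l" "\<bar>m'\<bar> \<le> int l'"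
      by (cases p, cases q) (use pq S in auto)
    then show ?thesis
      using Y unfolding sph_ONB_def y_def by auto
  qed
  have sq: "(\<Sum>(l, m)\<in>S. c l m * Y l m x)\<^sup>2
      = (\<Sum>p\<in>S. \<Sum>q\<in>S. case_prod c p * case_prod c q * (y p x * y q x))" for x
    by (simp add: y_def split_def power2_eq_square sum_product algebra_simps)
  have "integrable sphere_measure (\<lambda>x. (\<Sum>(l, m)\<in>S. c l m * Y l m x)\<^sup>2)"
    unfolding sq using orth by (auto intro!: integrable_sum integrable_mult_right)
  moreover have "(\<integral>x. (\<Sum>(l, m)\<in>S. c l m * Y l m x)\<^sup>2 \<partial>sphere_measure)
      = (\<Sum>p\<in>S. \<Sum>q\<in>S. case_prod c p * case_prod c q * (if p = q then 1 else 0))"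
    unfolding sq using orth by (simp add: integral_sum integrable_sum integrable_mult_right)
  moreover have "\<dots> = (\<Sum>(l, m)\<in>S. (c l m)\<^sup>2)"
    using S by (simp add: split_def power2_eq_square if_distrib cong: if_cong)
  ultimately show ?thesis
    by (simp add: nn_integral_eq_integral)
qed

lemma L2_sq_sum_sph_ONB:
  assumes "sph_ONB Y" "finite S" "S \<subseteq> {(l, m). \<bar>m\<bar> \<le> int l}"
    and "\<And>l m. (l, m) \<in> S \<Longrightarrow> (\<lambda>\<omega>. c \<omega> l m) \<in> borel_measurable M"
  shows "L2_sq M (\<lambda>\<omega> x. \<Sum>(l, m)\<in>S. c \<omega> l m * Y l m x)
    = (\<Sum>(l, m)\<in>S. \<integral>\<^sup>+\<omega>. ennreal ((c \<omega> l m)\<^sup>2) \<partial>M)"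
proof -
  have "L2_sq M (\<lambda>\<omega> x. \<Sum>(l, m)\<in>S. c \<omega> l m * Y l m x)
      = (\<integral>\<^sup>+\<omega>. (\<Sum>(l, m)\<in>S. ennreal ((c \<omega> l m)\<^sup>2)) \<partial>M)"
    unfolding L2_sq_def sph_ONB_nn_integral_sum_sq[OF assms(1-3)]
    by (simp add: split_def sum_ennreal)
  also have "\<dots> = (\<Sum>(l, m)\<in>S. \<integral>\<^sup>+\<omega>. ennreal ((c \<omega> l m)\<^sup>2) \<partial>M)"
    using assms(4) by (subst nn_integral_sum) (auto simp: split_def)
  finally show ?thesis .
qed

definition sph_indices :: "nat \<Rightarrow> (nat \<times> int) set" where
  "sph_indices L = (SIGMA l:{..L}. {-int l..int l})"

lemma finite_sph_indices [simp]: "finite (sph_indices L)"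
  by (simp add: sph_indices_def)

lemma sph_indices_subset: "sph_indices L \<subseteq> {(l, m). \<bar>m\<bar> \<le> int l}"
  by (auto simp: sph_indices_def)

lemma sph_indices_mono: "L \<le> L' \<Longrightarrow> sph_indices L \<subseteq> sph_indices L'"
  by (auto simp: sph_indices_def)

lemma sum_sph_indices:
  fixes f :: "nat \<Rightarrow> real"
  shows "(\<Sum>(l, m)\<in>sph_indices L. f l) = (\<Sum>l\<le>L. (2 * real l + 1) * f l)"
proof -
  have "card {-int l..int l} = 2 * l + 1" for l
    by simp
  then show ?thesis
    unfolding sph_indices_def by (subst sum.Sigma [symmetric]) (auto simp: add.commute)
qed

lemma trunc_field_eq_sum_sph_indices:
  "trunc_field A b Y L t \<omega> x = (\<Sum>(l, m)\<in>sph_indices L. sqrt (A l) * b l m t \<omega> * Y l m x)"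
  unfolding trunc_field_def sph_indices_def by (subst sum.Sigma) auto

lemma trunc_field_diff_eq:
  assumes "\<kappa> \<le> L"
  shows "trunc_field A b Y L t \<omega> x - trunc_field A b' Y \<kappa> t \<omega> x
    = (\<Sum>(l, m)\<in>sph_indices L. sqrt (A l) * (b l m t \<omega> - (if l \<le> \<kappa> then b' l m t \<omega> else 0)) * Y l m x)"
proof -
  have "sph_indices \<kappa> = sph_indices L \<inter> {(l, m). l \<le> \<kappa>}"
    using assms by (auto simp: sph_indices_def)
  then have "trunc_field A b' Y \<kappa> t \<omega> x
      = (\<Sum>(l, m)\<in>sph_indices L. if l \<le> \<kappa> then sqrt (A l) * b' l m t \<omega> * Y l m x else 0)"
    by (simp add: trunc_field_eq_sum_sph_indices sum.inter_restrict split_def if_distrib)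
  then show ?thesis
    by (simp add: trunc_field_eq_sum_sph_indices split_def flip: sum_subtractf)
      (intro sum.cong refl, simp add: algebra_simps)
qed

lemma L2_sq_trunc_field_diff_eq:
  assumes "sph_ONB Y" "\<kappa> \<le> L"
    and "\<And>l m. \<bar>m\<bar> \<le> int l \<Longrightarrow> (\<lambda>\<omega>. b l m t \<omega>) \<in> borel_measurable M"
    and "\<And>l m. \<bar>m\<bar> \<le> int l \<Longrightarrow> (\<lambda>\<omega>. b' l m t \<omega>) \<in> borel_measurable M"
  shows "L2_sq M (\<lambda>\<omega> x. trunc_field A b Y L t \<omega> x - trunc_field A b' Y \<kappa> t \<omega> x)
    = (\<Sum>(l, m)\<in>sph_indices L.
         \<integral>\<^sup>+\<omega>. ennreal ((sqrt (A l) * (b l m t \<omega> - (if l \<le> \<kappa> then b' l m t \<omega> else 0)))\<^sup>2) \<partial>M)"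
proof -
  have "(\<lambda>\<omega>. sqrt (A l) * (b l m t \<omega> - (if l \<le> \<kappa> then b' l m t \<omega> else 0))) \<in> borel_measurable M"
    if "(l, m) \<in> sph_indices L" for l m
  proof -
    have "\<bar>m\<bar> \<le> int l"
      using that sph_indices_subset by blast
    then show ?thesis
      using assms(3,4) by (cases "l \<le> \<kappa>") (auto intro!: borel_measurable_times borel_measurable_diff)
  qed
  then show ?thesis
    unfolding trunc_field_diff_eq[OF assms(2)] using assms(1) sph_indices_subset
    by (intro L2_sq_sum_sph_ONB) auto
qed

lemma L2_sq_trunc_field_diff_mono:
  assumes "sph_ONB Y" "\<kappa> \<le> L" "L \<le> L'"
    and "\<And>l m. \<bar>m\<bar> \<le> int l \<Longrightarrow> (\<lambda>\<omega>. b l m t \<omega>) \<in> borel_measurable M"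
    and "\<And>l m. \<bar>m\<bar> \<le> int l \<Longrightarrow> (\<lambda>\<omega>. b' l m t \<omega>) \<in> borel_measurable M"
  shows "L2_sq M (\<lambda>\<omega> x. trunc_field A b Y L t \<omega> x - trunc_field A b' Y \<kappa> t \<omega> x)
    \<le> L2_sq M (\<lambda>\<omega> x. trunc_field A b Y L' t \<omega> x - trunc_field A b' Y \<kappa> t \<omega> x)"
proof -
  have "\<kappa> \<le> L'"
    using assms(2,3) by linarith
  then show ?thesis
    using assms by (simp add: L2_sq_trunc_field_diff_eq sum_mono2 sph_indices_mono)
qed

lemma L2_sq_trunc_field_diff_le:
  fixes A :: "nat \<Rightarrow> real"
  assumes "sph_ONB Y" "\<And>l. 0 \<le> A l" "\<kappa> \<le> L" "0 \<le> e" "0 \<le> v"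
    and "\<And>l m. \<bar>m\<bar> \<le> int l \<Longrightarrow> (\<lambda>\<omega>. b l m t \<omega>) \<in> borel_measurable M"
    and "\<And>l m. \<bar>m\<bar> \<le> int l \<Longrightarrow> (\<lambda>\<omega>. b' l m t \<omega>) \<in> borel_measurable M"
    and "\<And>l m. \<bar>m\<bar> \<le> int l \<Longrightarrow> l \<le> \<kappa> \<Longrightarrow>
           (\<integral>\<^sup>+\<omega>. ennreal ((b' l m t \<omega> - b l m t \<omega>)\<^sup>2) \<partial>M) \<le> ennreal e"
    and "\<And>l m. \<bar>m\<bar> \<le> int l \<Longrightarrow> \<kappa> < l \<Longrightarrow> (\<integral>\<^sup>+\<omega>. ennreal ((b l m t \<omega>)\<^sup>2) \<partial>M) \<le> ennreal v"
  shows "L2_sq M (\<lambda>\<omega> x. trunc_field A b Y L t \<omega> x - trunc_field A b' Y \<kappa> t \<omega> x)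
    \<le> ennreal (e * (\<Sum>l\<le>\<kappa>. (2 * real l + 1) * A l) + v * (\<Sum>l\<in>{\<kappa><..L}. (2 * real l + 1) * A l))"
proof -
  define w where "w l = (if l \<le> \<kappa> then e else v)" for l
  have term_le: "(\<integral>\<^sup>+\<omega>. ennreal ((sqrt (A l) * (b l m t \<omega> - (if l \<le> \<kappa> then b' l m t \<omega> else 0)))\<^sup>2) \<partial>M)
      \<le> ennreal (A l * w l)" if "\<bar>m\<bar> \<le> int l" for l m
  proof -
    define d where "d \<omega> = (if l \<le> \<kappa> then b' l m t \<omega> - b l m t \<omega> else b l m t \<omega>)" for \<omega>
    have "(\<integral>\<^sup>+\<omega>. ennreal ((sqrt (A l) * (b l m t \<omega> - (if l \<le> \<kappa> then b' l m t \<omega> else 0)))\<^sup>2) \<partial>M)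
        = (\<integral>\<^sup>+\<omega>. ennreal (A l) * ennreal ((d \<omega>)\<^sup>2) \<partial>M)"
      using assms(2) by (intro nn_integral_cong)
        (simp add: d_def power_mult_distrib ennreal_mult' power2_commute)
    also have "\<dots> = ennreal (A l) * (\<integral>\<^sup>+\<omega>. ennreal ((d \<omega>)\<^sup>2) \<partial>M)"
      using assms(6,7) that by (intro nn_integral_cmult) (simp add: d_def)
    also have "\<dots> \<le> ennreal (A l) * ennreal (w l)"
      using assms(8,9) that by (intro mult_left_mono) (auto simp: d_def w_def)
    finally show ?thesis
      using assms(2) by (simp add: ennreal_mult')
  qed
  have "L2_sq M (\<lambda>\<omega> x. trunc_field A b Y L t \<omega> x - trunc_field A b' Y \<kappa> t \<omega> x)
      = (\<Sum>(l, m)\<in>sph_indices L.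
           \<integral>\<^sup>+\<omega>. ennreal ((sqrt (A l) * (b l m t \<omega> - (if l \<le> \<kappa> then b' l m t \<omega> else 0)))\<^sup>2) \<partial>M)"
    using assms(1,3,6,7) by (simp add: L2_sq_trunc_field_diff_eq)
  also have "\<dots> \<le> (\<Sum>(l, m)\<in>sph_indices L. ennreal (A l * w l))"
    using sph_indices_subset by (intro sum_mono) (auto intro: term_le)
  also have "\<dots> = ennreal (\<Sum>l\<le>L. (2 * real l + 1) * (A l * w l))"
    using assms(2,4,5) by (simp add: split_def w_def sum_sph_indices [symmetric])
  also have "(\<Sum>l\<le>L. (2 * real l + 1) * (A l * w l))
      = (\<Sum>l\<le>\<kappa>. (2 * real l + 1) * (A l * w l)) + (\<Sum>l\<in>{\<kappa><..L}. (2 * real l + 1) * (A l * w l))"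
    using assms(3) by (subst sum.union_disjoint [symmetric]) (auto intro: sum.cong)
  also have "\<dots> = e * (\<Sum>l\<le>\<kappa>. (2 * real l + 1) * A l) + v * (\<Sum>l\<in>{\<kappa><..L}. (2 * real l + 1) * A l)"
    by (simp add: w_def sum_distrib_left algebra_simps)
  finally show ?thesis .
qed

lemma L2_sq_trunc_field_diff_tendsto_le:
  fixes A :: "nat \<Rightarrow> real"
  assumes "sph_ONB Y" "\<And>l. 0 \<le> A l" "summable (\<lambda>l. (2 * real l + 1) * A l)" "0 \<le> e" "0 \<le> v"
    and "\<And>L. (\<Sum>l\<in>{\<kappa><..L}. (2 * real l + 1) * A l) \<le> \<tau>"
    and "\<And>l m. \<bar>m\<bar> \<le> int l \<Longrightarrow> (\<lambda>\<omega>. b l m t \<omega>) \<in> borel_measurable M"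
    and "\<And>l m. \<bar>m\<bar> \<le> int l \<Longrightarrow> (\<lambda>\<omega>. b' l m t \<omega>) \<in> borel_measurable M"
    and "\<And>l m. \<bar>m\<bar> \<le> int l \<Longrightarrow> l \<le> \<kappa> \<Longrightarrow>
           (\<integral>\<^sup>+\<omega>. ennreal ((b' l m t \<omega> - b l m t \<omega>)\<^sup>2) \<partial>M) \<le> ennreal e"
    and "\<And>l m. \<bar>m\<bar> \<le> int l \<Longrightarrow> \<kappa> < l \<Longrightarrow> (\<integral>\<^sup>+\<omega>. ennreal ((b l m t \<omega>)\<^sup>2) \<partial>M) \<le> ennreal v"
  shows "\<exists>E. (\<lambda>L. L2_sq M (\<lambda>\<omega> x. trunc_field A b Y L t \<omega> x - trunc_field A b' Y \<kappa> t \<omega> x)) \<longlonglongrightarrow> E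
    \<and> E \<le> ennreal (e * trQ A + v * \<tau>)"
proof (rule ex_LIMSEQ_le_if_mono_bounded_from)
  show "L2_sq M (\<lambda>\<omega> x. trunc_field A b Y L t \<omega> x - trunc_field A b' Y \<kappa> t \<omega> x)
      \<le> L2_sq M (\<lambda>\<omega> x. trunc_field A b Y L' t \<omega> x - trunc_field A b' Y \<kappa> t \<omega> x)"
    if "\<kappa> \<le> L" "L \<le> L'" for L L'
    using assms(1) that assms(7,8) by (rule L2_sq_trunc_field_diff_mono)
  show "L2_sq M (\<lambda>\<omega> x. trunc_field A b Y L t \<omega> x - trunc_field A b' Y \<kappa> t \<omega> x)
      \<le> ennreal (e * trQ A + v * \<tau>)" if "\<kappa> \<le> L" for L
  proof -
    have "L2_sq M (\<lambda>\<omega> x. trunc_field A b Y L t \<omega> x - trunc_field A b' Y \<kappa> t \<omega> x)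
        \<le> ennreal (e * (\<Sum>l\<le>\<kappa>. (2 * real l + 1) * A l) + v * (\<Sum>l\<in>{\<kappa><..L}. (2 * real l + 1) * A l))"
      using assms(1,2) that assms(4,5,7-10) by (rule L2_sq_trunc_field_diff_le)
    also have "\<dots> \<le> ennreal (e * trQ A + v * \<tau>)"
      using assms by (intro ennreal_leI add_mono mult_left_mono trQ_partial_le) auto
    finally show ?thesis .
  qed
qed

theorem corollary5p2:
  fixes M :: "'a measure" and H :: real and n0 :: nat
    and A :: "nat \<Rightarrow> real" and C \<alpha> :: real and l0 :: nat
    and Y :: "nat \<Rightarrow> int \<Rightarrow> real \<times> real \<times> real \<Rightarrow> real"
    and \<beta> :: "nat \<Rightarrow> int \<Rightarrow> real \<Rightarrow> 'a \<Rightarrow> real"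
    and \<beta>\<mu> :: "nat \<Rightarrow> nat \<Rightarrow> int \<Rightarrow> real \<Rightarrow> 'a \<Rightarrow> real"
    and C' r :: real
  assumes "prob_space M"
    and "0 < H" "H < 1"
    and "\<And>l. A l \<ge> 0"
    and "C > 0" "l0 \<ge> 1" "\<alpha> > 2"
    and "\<And>l. l > l0 \<Longrightarrow> A l \<le> C * real l powr (-\<alpha>)"
    and "sph_ONB Y"
    and "\<And>l m. \<bar>m\<bar> \<le> int l \<Longrightarrow> fBm M H (\<beta> l m)"
    and "prob_space.indep_vars M (\<lambda>_. PiM {0..1::real} (\<lambda>_. borel))
           (\<lambda>(l, m) \<omega>. restrict (\<lambda>t. \<beta> l m t \<omega>) {0..1}) {(l, m). \<bar>m\<bar> \<le> int l}"
    and "C' > 0" "r > 0"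
    and "\<And>\<mu> l m j. \<bar>m\<bar> \<le> int l \<Longrightarrow> j \<le> 2 ^ n0 \<Longrightarrow>
           \<beta>\<mu> \<mu> l m (real j / 2 ^ n0) \<in> borel_measurable M"
    and "\<And>\<mu> l m j. \<mu> \<ge> 1 \<Longrightarrow> \<bar>m\<bar> \<le> int l \<Longrightarrow> j \<le> 2 ^ n0 \<Longrightarrow>
           (\<integral>\<^sup>+\<omega>. ennreal ((\<beta>\<mu> \<mu> l m (real j / 2 ^ n0) \<omega> - \<beta> l m (real j / 2 ^ n0) \<omega>)\<^sup>2) \<partial>M)
             \<le> ennreal ((C' * real \<mu> powr (-r))\<^sup>2)"
  shows "\<exists>Ct. \<forall>\<kappa> \<ge> l0. \<forall>\<mu> \<ge> 1. \<forall>j \<le> (2::nat) ^ n0.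
           \<exists>E. (\<lambda>L. L2_sq M (\<lambda>\<omega> x. trunc_field A \<beta> Y L (real j / 2 ^ n0) \<omega> x
                                   - trunc_field A (\<beta>\<mu> \<mu>) Y \<kappa> (real j / 2 ^ n0) \<omega> x)) \<longlonglongrightarrow> E
             \<and> E \<le> ennreal ((Ct * (real \<kappa> powr (-(\<alpha> - 2) / 2) + sqrt (trQ A) * real \<mu> powr (-r)))\<^sup>2)"
proof -
  note A_nonneg = assms(4) and decay = assms(8) and fbm = assms(10)
  define K where "K = 3 * C / (\<alpha> - 2)"
  have summable: "summable (\<lambda>l. (2 * real l + 1) * A l)"
    using A_nonneg decay assms(7) by (rule summable_trQ_terms)
  have "0 \<le> trQ A"
    unfolding trQ_def using A_nonneg by (intro suminf_nonneg[OF summable]) auto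
  show ?thesis
  proof (intro exI[of _ "max C' (sqrt K)"] allI impI)
    fix \<kappa> \<mu> j :: nat
    assume \<kappa>: "\<kappa> \<ge> l0" and \<mu>: "\<mu> \<ge> 1" and j: "j \<le> 2 ^ n0"
    define t where "t = real j / 2 ^ n0"
    have t: "t \<in> {0..1}"
      using j by (simp add: t_def field_simps)
    have "\<exists>E. (\<lambda>L. L2_sq M (\<lambda>\<omega> x. trunc_field A \<beta> Y L t \<omega> x - trunc_field A (\<beta>\<mu> \<mu>) Y \<kappa> t \<omega> x))
        \<longlonglongrightarrow> E \<and> E \<le> ennreal ((C' * real \<mu> powr (-r))\<^sup>2 * trQ A + 1 * (K * real \<kappa> powr (2 - \<alpha>)))"
    proof (rule L2_sq_trunc_field_diff_tendsto_le[OF assms(9) A_nonneg summable])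
      show "(\<Sum>l\<in>{\<kappa><..L}. (2 * real l + 1) * A l) \<le> K * real \<kappa> powr (2 - \<alpha>)" for L
        unfolding K_def using A_nonneg decay assms(5-7) \<kappa> by (intro trQ_partial_tail_le) auto
      show "\<beta> l m t \<in> borel_measurable M" if "\<bar>m\<bar> \<le> int l" for l m
        using fbm[OF that] t unfolding fBm_def by blast
      show "\<beta>\<mu> \<mu> l m t \<in> borel_measurable M" if "\<bar>m\<bar> \<le> int l" for l m
        using assms(14)[OF that j] by (simp add: t_def)
      show "(\<integral>\<^sup>+\<omega>. ennreal ((\<beta>\<mu> \<mu> l m t \<omega> - \<beta> l m t \<omega>)\<^sup>2) \<partial>M) \<le> ennreal ((C' * real \<mu> powr (-r))\<^sup>2)"
        if "\<bar>m\<bar> \<le> int l" for l m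
        using assms(15)[OF \<mu> that j] by (simp add: t_def)
      show "(\<integral>\<^sup>+\<omega>. ennreal ((\<beta> l m t \<omega>)\<^sup>2) \<partial>M) \<le> ennreal 1" if "\<bar>m\<bar> \<le> int l" for l m
        using fBm_nn_integral_sq_le_1[OF fbm[OF that] _ t] assms(2) by simp
    qed simp_all
    moreover have "(C' * real \<mu> powr (-r))\<^sup>2 * trQ A + 1 * (K * real \<kappa> powr (2 - \<alpha>))
        \<le> (max C' (sqrt K) * (real \<kappa> powr (-(\<alpha> - 2) / 2) + sqrt (trQ A) * real \<mu> powr (-r)))\<^sup>2"
      using sq_rate_combination_le[of K "trQ A" "real \<mu> powr (-r)" C' "real \<kappa>" "2 - \<alpha>"]
        \<open>0 \<le> trQ A\<close> assms(5,7,12) by (simp add: K_def algebra_simps)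
    ultimately show "\<exists>E. (\<lambda>L. L2_sq M (\<lambda>\<omega> x. trunc_field A \<beta> Y L (real j / 2 ^ n0) \<omega> x
                                   - trunc_field A (\<beta>\<mu> \<mu>) Y \<kappa> (real j / 2 ^ n0) \<omega> x)) \<longlonglongrightarrow> E
             \<and> E \<le> ennreal ((max C' (sqrt K) * (real \<kappa> powr (-(\<alpha> - 2) / 2) + sqrt (trQ A) * real \<mu> powr (-r)))\<^sup>2)"
      unfolding t_def by (meson ennreal_leI order_trans)
  qed
qed

end
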